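(* For every $n\ge 3$, the cycle $C_n$ on $n$ vertices satisfies $$\mathrm{vol}(C_n)=1-\frac{2^{n-1}}{n!}.$$
   Context: For a finite simple undirected graph $G=(V,E)$ with $V=[n]$, and $S\subseteq[n-1]$, the cut vector $x^S\in\mathbb{R}^{|E|}$ has coordinates $x^S_{ij}=1$ if $|\{i,j\}\cap S|=1$ and $x^S_{ij}=0$ otherwise, for each edge $(i,j)\in E$. The cut polytope is $\mathrm{Cut}(G)=\mathrm{conv}\{x^S: S\subseteq[n-1]\}\subset\mathbb{R}^{|E|}$, and $\mathrm{vol}(G)$ denotes the $|E|$-dimensional Lebesgue volume of $\mathrm{Cut}(G)$. *)

theory Defs
  imports "HOL-Analysis.Analysis"
begin

text \<open>Graphs on vertex set [n] = {1..n}; an edge is a 2-element set of vertices.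
  Points of R^E are functions E -> real (extensional outside E), measured with the
  product Lebesgue measure PiM E (\<lambda>_. lborel), i.e. |E|-dimensional Lebesgue measure.\<close>

definition cut_vector :: "nat set \<Rightarrow> nat set \<Rightarrow> real" where
  "cut_vector S e = (if card (e \<inter> S) = 1 then 1 else 0)"

text \<open>Cut polytope: convex hull of the cut vectors x^S, S \<subseteq> [n-1], written out
  as the set of all convex combinations of this finite family.\<close>
definition cut_polytope :: "nat \<Rightarrow> nat set set \<Rightarrow> (nat set \<Rightarrow> real) set" where
  "cut_polytope n E =
     {x. \<exists>c :: nat set \<Rightarrow> real. (\<forall>S. 0 \<le> c S) \<and> (\<Sum>S\<in>Pow {1..n-1}. c S) = 1 \<and>
          x = (\<lambda>e\<in>E. \<Sum>S\<in>Pow {1..n-1}. c S * cut_vector S e)}"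

definition cut_volume :: "nat \<Rightarrow> nat set set \<Rightarrow> real" where
  "cut_volume n E = measure (PiM E (\<lambda>_. lborel)) (cut_polytope n E)"

definition cycle_edges :: "nat \<Rightarrow> nat set set" where
  "cycle_edges n = {{i, i + 1} | i. 1 \<le> i \<and> i < n} \<union> {{n, 1}}"

end

theory Submission
  imports Defs
begin

text \<open>The cut vectors of \<open>C\<^sub>n\<close> are exactly the 0/1 vectors of even weight on its \<open>n\<close>
  edges, so \<open>Cut(C\<^sub>n)\<close> is the \<open>n\<close>-dimensional parity polytope. By Jeroslow's description,
  this polytope is the unit cube with the corner \<open>{x. \<parallel>x - 1\<^sub>F\<parallel>\<^sub>1 < 1}\<close> cut off at every
  odd vertex \<open>1\<^sub>F\<close>. Odd vertices are at \<open>l\<^sub>1\<close>-distance at least 2 from each other,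
  so the \<open>2\<^sup>n\<^sup>-\<^sup>1\<close> corners are disjoint, and each is a reflected copy of the open
  standard simplex of volume \<open>1/n!\<close>.\<close>

section \<open>The parity polytope\<close>

definition even_subsets :: "'a set \<Rightarrow> 'a set set" where
  "even_subsets I = {F. F \<subseteq> I \<and> even (card F)}"

definition odd_subsets :: "'a set \<Rightarrow> 'a set set" where
  "odd_subsets I = {F. F \<subseteq> I \<and> odd (card F)}"

definition in_unit_cube :: "'a set \<Rightarrow> ('a \<Rightarrow> real) \<Rightarrow> bool" where
  "in_unit_cube I x \<longleftrightarrow> (\<forall>i\<in>I. 0 \<le> x i \<and> x i \<le> 1)"

definition l1_dist :: "'a set \<Rightarrow> ('a \<Rightarrow> real) \<Rightarrow> 'a set \<Rightarrow> real" where
  "l1_dist I x F = (\<Sum>i\<in>I. \<bar>x i - indicator F i\<bar>)"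

definition parity_ineqs :: "'a set \<Rightarrow> ('a \<Rightarrow> real) \<Rightarrow> bool" where
  "parity_ineqs I x \<longleftrightarrow> in_unit_cube I x \<and> (\<forall>F\<in>odd_subsets I. 1 \<le> l1_dist I x F)"

definition parity_polytope :: "'a set \<Rightarrow> ('a \<Rightarrow> real) set" where
  "parity_polytope I = {x. \<exists>d. (\<forall>F. 0 \<le> d F) \<and> sum d (even_subsets I) = 1 \<and>
     (\<forall>i\<in>I. x i = (\<Sum>F\<in>even_subsets I. d F * indicator F i))}"

lemma finite_even_subsets [simp]: "finite I \<Longrightarrow> finite (even_subsets I)"
  unfolding even_subsets_def by (rule finite_subset[of _ "Pow I"]) auto

lemma finite_odd_subsets [simp]: "finite I \<Longrightarrow> finite (odd_subsets I)"
  unfolding odd_subsets_def by (rule finite_subset[of _ "Pow I"]) auto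

lemma even_card_sym_diff:
  assumes "finite F" "finite G"
  shows "even (card (sym_diff F G)) \<longleftrightarrow> (even (card F) \<longleftrightarrow> even (card G))"
proof -
  have "card (sym_diff F G) + 2 * card (F \<inter> G) = card F + card G"
  proof -
    have "card (sym_diff F G) = card (F - G) + card (G - F)"
      using assms by (intro card_Un_disjoint) auto
    moreover have "card F = card (F - G) + card (F \<inter> G)" "card G = card (G - F) + card (F \<inter> G)"
      using assms by (metis card_Diff_subset_Int card_mono inf_le1 le_add_diff_inverse2 finite_Int Int_commute)+
    ultimately show ?thesis by simp
  qed
  then show ?thesis by (metis even_add even_mult_iff even_numeral)
qed

lemma card_sym_diff_pos:
  assumes "finite F" "finite G" "F \<noteq> G"
  shows "1 \<le> card (sym_diff F G)"
  using assms by (auto simp: Suc_le_eq card_gt_0_iff)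

lemma two_le_card_sym_diff:
  assumes "finite F" "finite G" "F \<noteq> G" "even (card F) \<longleftrightarrow> even (card G)"
  shows "2 \<le> card (sym_diff F G)"
proof -
  have "1 \<le> card (sym_diff F G)" "even (card (sym_diff F G))"
    using card_sym_diff_pos[OF assms(1-3)] even_card_sym_diff[OF assms(1,2)] assms(4) by auto
  then show ?thesis
    by presburger
qed

lemma sum_indicator_subset:
  assumes "finite I" "A \<subseteq> I"
  shows "(\<Sum>i\<in>I. indicator A i) = real (card A)"
proof -
  have "(\<Sum>i\<in>I. indicator A i) = (\<Sum>i\<in>I. 1 * indicator A i :: real)"
    by simp
  also have "\<dots> = (\<Sum>i\<in>{i\<in>I. i \<in> A}. 1)"
    by (rule sum_mult_indicator[OF assms(1)])
  also have "{i\<in>I. i \<in> A} = A"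
    using assms(2) by blast
  finally show ?thesis
    by simp
qed

lemma l1_dist_indicator:
  assumes "finite I" "F \<subseteq> I" "G \<subseteq> I"
  shows "l1_dist I (indicator G) F = card (sym_diff F G)"
proof -
  have "l1_dist I (indicator G) F = (\<Sum>i\<in>I. indicator (sym_diff F G) i)"
    unfolding l1_dist_def by (intro sum.cong) (auto simp: indicator_def)
  also have "\<dots> = card (sym_diff F G)"
    using assms by (intro sum_indicator_subset) auto
  finally show ?thesis .
qed

lemma indicator_sym_diff_singleton:
  "indicator (sym_diff F {j}) i = (if i = j then 1 - indicator F i else (indicator F i :: real))"
  by (auto simp: indicator_def)

lemma l1_dist_fun_upd:
  assumes "finite I" "i \<in> I"
  shows "l1_dist I (x(i := v)) F = l1_dist I x F - \<bar>x i - indicator F i\<bar> + \<bar>v - indicator F i\<bar>"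
  using assms by (simp add: l1_dist_def sum.remove)

lemma in_unit_cube_if_in_parity_polytope:
  assumes "x \<in> parity_polytope I"
  shows "in_unit_cube I x"
  unfolding in_unit_cube_def
proof
  fix i assume i: "i \<in> I"
  obtain d where d0: "\<And>G. 0 \<le> d G" and d1: "sum d (even_subsets I) = 1"
    and x_i: "x i = (\<Sum>G\<in>even_subsets I. d G * indicator G i)"
    using assms i unfolding parity_polytope_def by blast
  have "0 \<le> (\<Sum>G\<in>even_subsets I. d G * indicator G i)"
    by (intro sum_nonneg mult_nonneg_nonneg d0) simp
  moreover have "(\<Sum>G\<in>even_subsets I. d G * indicator G i) \<le> (\<Sum>G\<in>even_subsets I. d G)"
    by (intro sum_mono) (simp add: d0 indicator_def)
  ultimately show "0 \<le> x i \<and> x i \<le> 1"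
    using x_i d1 by simp
qed

lemma parity_ineqs_if_in_parity_polytope:
  assumes fin: "finite I" and x: "x \<in> parity_polytope I"
  shows "parity_ineqs I x"
proof -
  obtain d where d0: "\<And>G. 0 \<le> d G" and d1: "sum d (even_subsets I) = 1"
    and dx: "\<And>i. i \<in> I \<Longrightarrow> x i = (\<Sum>G\<in>even_subsets I. d G * indicator G i)"
    using x unfolding parity_polytope_def by blast
  have cube: "in_unit_cube I x"
    using x by (rule in_unit_cube_if_in_parity_polytope)
  have "1 \<le> l1_dist I x F" if F: "F \<in> odd_subsets I" for F
  proof -
    \<comment> \<open>On the unit cube, \<open>\<bar>x i - indicator F i\<bar>\<close> is affine in \<open>x i\<close>.\<close>
    have "\<bar>x i - indicator F i\<bar> = (\<Sum>G\<in>even_subsets I. d G * \<bar>indicator G i - indicator F i\<bar>)"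
      if i: "i \<in> I" for i
    proof (cases "i \<in> F")
      case True
      have "\<bar>x i - indicator F i\<bar> = (\<Sum>G\<in>even_subsets I. d G) - (\<Sum>G\<in>even_subsets I. d G * indicator G i)"
        using cube i True d1 dx[OF i] by (auto simp: in_unit_cube_def)
      also have "\<dots> = (\<Sum>G\<in>even_subsets I. d G * \<bar>indicator G i - indicator F i\<bar>)"
        unfolding sum_subtractf[symmetric] using True by (intro sum.cong) (auto simp: indicator_def)
      finally show ?thesis .
    next
      case False
      then show ?thesis
        using cube i dx[OF i] by (auto simp: in_unit_cube_def indicator_def intro!: sum.cong)
    qed
    then have "l1_dist I x F = (\<Sum>G\<in>even_subsets I. d G * l1_dist I (indicator G) F)"
      unfolding l1_dist_def sum_distrib_left by (subst sum.swap) (intro sum.cong refl)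
    also have "\<dots> \<ge> (\<Sum>G\<in>even_subsets I. d G * 1)"
    proof (intro sum_mono mult_left_mono d0)
      fix G assume G: "G \<in> even_subsets I"
      then have "F \<noteq> G" "F \<subseteq> I" "G \<subseteq> I"
        using F by (auto simp: even_subsets_def odd_subsets_def)
      then show "1 \<le> l1_dist I (indicator G) F"
        using fin card_sym_diff_pos[of F G] finite_subset[of F I] finite_subset[of G I]
        by (simp add: l1_dist_indicator)
    qed
    finally show ?thesis using d1 by simp
  qed
  with cube show ?thesis unfolding parity_ineqs_def by blast
qed

lemma parity_polytope_convex_sum:
  assumes "finite J" and y: "\<And>j. j \<in> J \<Longrightarrow> y j \<in> parity_polytope I"
    and t: "\<And>j. j \<in> J \<Longrightarrow> 0 \<le> t j" "sum t J = 1"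
    and x: "\<And>i. i \<in> I \<Longrightarrow> x i = (\<Sum>j\<in>J. t j * y j i)"
  shows "x \<in> parity_polytope I"
proof -
  have "\<forall>j\<in>J. \<exists>dj. (\<forall>F. 0 \<le> dj F) \<and> sum dj (even_subsets I) = 1 \<and>
      (\<forall>i\<in>I. y j i = (\<Sum>F\<in>even_subsets I. dj F * indicator F i))"
    using y unfolding parity_polytope_def by blast
  then obtain d where d: "\<forall>j\<in>J. (\<forall>F. 0 \<le> d j F) \<and> sum (d j) (even_subsets I) = 1 \<and>
      (\<forall>i\<in>I. y j i = (\<Sum>F\<in>even_subsets I. d j F * indicator F i))"
    by metis
  then have d0: "\<And>j F. j \<in> J \<Longrightarrow> 0 \<le> d j F"
    and d1: "\<And>j. j \<in> J \<Longrightarrow> sum (d j) (even_subsets I) = 1"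
    and dy: "\<And>j i. j \<in> J \<Longrightarrow> i \<in> I \<Longrightarrow> y j i = (\<Sum>F\<in>even_subsets I. d j F * indicator F i)"
    by blast+
  define c where "c F = (\<Sum>j\<in>J. t j * d j F)" for F
  have "0 \<le> c F" for F
    unfolding c_def using t d0 by (simp add: sum_nonneg)
  moreover have "sum c (even_subsets I) = 1"
    unfolding c_def using t d1 by (subst sum.swap) (simp add: sum_distrib_left[symmetric])
  moreover have "x i = (\<Sum>F\<in>even_subsets I. c F * indicator F i)" if i: "i \<in> I" for i
    unfolding x[OF i] c_def sum_distrib_right using dy[OF _ i]
    by (subst sum.swap) (simp add: sum_distrib_left mult.assoc)
  ultimately show ?thesis unfolding parity_polytope_def by blast
qed

lemma parity_polytope_segment:
  assumes "y \<in> parity_polytope I" "z \<in> parity_polytope I" "0 \<le> t" "t \<le> 1"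
    and "\<And>i. i \<in> I \<Longrightarrow> x i = t * y i + (1 - t) * z i"
  shows "x \<in> parity_polytope I"
proof (rule parity_polytope_convex_sum[of "{True, False}" "\<lambda>b. if b then y else z" I
    "\<lambda>b. if b then t else 1 - t"])
  fix i assume "i \<in> I"
  then show "x i = (\<Sum>b\<in>{True, False}. (if b then t else 1 - t) * (if b then y else z) i)"
    using assms(5) by simp
qed (use assms in auto)

lemma indicator_in_parity_polytope:
  assumes "finite I" "F \<in> even_subsets I" "\<And>i. i \<in> I \<Longrightarrow> x i = indicator F i"
  shows "x \<in> parity_polytope I"
proof -
  have "x i = (\<Sum>G\<in>even_subsets I. (if G = F then 1 else 0) * indicator G i)" if "i \<in> I" for i
  proof -
    have "(\<Sum>G\<in>even_subsets I. (if G = F then 1 else 0) * indicator G i)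
        = (\<Sum>G\<in>even_subsets I. if G = F then indicator F i else 0 :: real)"
      by (intro sum.cong) simp_all
    then show ?thesis
      using assms that by simp
  qed
  then show ?thesis
    unfolding parity_polytope_def using assms by (intro CollectI exI[of _ "\<lambda>G. if G = F then 1 else 0"]) auto
qed

text \<open>A point on the facet of an odd vertex \<open>F\<close> is the convex combination, with weights
  \<open>\<bar>x j - indicator F j\<bar>\<close>, of the even neighbours \<open>sym_diff F {j}\<close> of \<open>F\<close>.\<close>
lemma in_parity_polytope_if_tight:
  assumes fin: "finite I" and cube: "in_unit_cube I x" and F: "F \<in> odd_subsets I"
    and tight: "l1_dist I x F = 1"
  shows "x \<in> parity_polytope I"
proof (rule parity_polytope_convex_sum[OF fin])
  fix j assume j: "j \<in> I"
  have "sym_diff F {j} \<in> even_subsets I"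
    using F j fin even_card_sym_diff[of F "{j}"] finite_subset
    by (auto simp: even_subsets_def odd_subsets_def)
  then show "indicator (sym_diff F {j}) \<in> parity_polytope I"
    using fin by (intro indicator_in_parity_polytope) auto
next
  show "(\<Sum>j\<in>I. \<bar>x j - indicator F j\<bar>) = 1"
    using tight unfolding l1_dist_def .
next
  fix i assume i: "i \<in> I"
  define a where "a j = \<bar>x j - indicator F j\<bar>" for j
  have "(\<Sum>j\<in>I. a j * indicator (sym_diff F {j}) i)
      = (\<Sum>j\<in>I. a j * indicator F i + (if j = i then a j * (1 - 2 * indicator F i) else 0))"
    by (intro sum.cong refl) (auto simp: indicator_sym_diff_singleton algebra_simps)
  also have "\<dots> = (\<Sum>j\<in>I. a j) * indicator F i + a i * (1 - 2 * indicator F i)"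
    using fin i by (simp add: sum.distrib sum_distrib_right)
  also have "\<dots> = x i"
    using tight cube i unfolding a_def l1_dist_def in_unit_cube_def by (auto simp: indicator_def)
  finally show "x i = (\<Sum>j\<in>I. \<bar>x j - indicator F j\<bar> * indicator (sym_diff F {j}) i)"
    unfolding a_def ..
qed simp

lemma in_parity_polytope_if_integral:
  assumes fin: "finite I" and x: "parity_ineqs I x" and integral: "\<And>i. i \<in> I \<Longrightarrow> x i = 0 \<or> x i = 1"
  shows "x \<in> parity_polytope I"
proof -
  define F where "F = {i\<in>I. x i = 1}"
  have x_eq: "x i = indicator F i" if "i \<in> I" for i
    using integral[OF that] that unfolding F_def by auto
  have "F \<notin> odd_subsets I"
  proof
    assume "F \<in> odd_subsets I"
    moreover have "l1_dist I x F = 0"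
      unfolding l1_dist_def using x_eq by simp
    ultimately show False
      using x unfolding parity_ineqs_def by fastforce
  qed
  then have "F \<in> even_subsets I"
    unfolding even_subsets_def odd_subsets_def F_def by auto
  then show ?thesis
    using indicator_in_parity_polytope[OF fin _ x_eq] by blast
qed

lemma in_parity_polytope_between:
  assumes a: "x(i := a) \<in> parity_polytope I" and b: "x(i := b) \<in> parity_polytope I"
    and between: "a \<le> x i" "x i \<le> b"
  shows "x \<in> parity_polytope I"
proof (cases "a = b")
  case True
  then show ?thesis
    using a between by (metis antisym fun_upd_triv)
next
  case False
  define t where "t = (x i - a) / (b - a)"
  have ba: "0 < b - a"
    using between False by simp
  have t: "0 \<le> t" "t \<le> 1"
    unfolding t_def using between ba by simp_all
  have "t * (b - a) = x i - a"
    unfolding t_def using ba by simp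
  then have x_i: "x i = t * b + (1 - t) * a"
    by (simp add: algebra_simps)
  show ?thesis
  proof (rule parity_polytope_segment[OF b a t(1,2)])
    fix j
    show "x j = t * (x(i := b)) j + (1 - t) * (x(i := a)) j"
      using x_i by (cases "j = i") (simp_all add: algebra_simps)
  qed
qed

text \<open>Moving a fractional coordinate \<open>x i\<close> towards \<open>v \<in> {0, 1}\<close> only shrinks the distances to
  the odd vertices \<open>F\<close> with \<open>indicator F i = v\<close>; so one can move until \<open>x i\<close> reaches \<open>v\<close> or
  one of these inequalities becomes tight.\<close>
lemma move_coordinate_until_tight:
  assumes fin: "finite I" and x: "parity_ineqs I x" and i: "i \<in> I" "0 < x i" "x i < 1"
    and v: "v = 0 \<or> v = 1"
  obtains w where "min v (x i) \<le> w" "w \<le> max v (x i)" "parity_ineqs I (x(i := w))"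
    "w = v \<or> (\<exists>F\<in>odd_subsets I. l1_dist I (x(i := w)) F = 1)"
proof -
  define B where "B = {F \<in> odd_subsets I. indicator F i = v}"
  define s where "s = Min (insert \<bar>v - x i\<bar> ((\<lambda>F. l1_dist I x F - 1) ` B))"
  define w where "w = x i + s * (2 * v - 1)"
  have fin_B: "finite B"
    unfolding B_def using fin by simp
  have s_le: "s \<le> \<bar>v - x i\<bar>" "\<And>F. F \<in> B \<Longrightarrow> s \<le> l1_dist I x F - 1"
    unfolding s_def using fin_B by auto
  have s_ge: "0 \<le> s"
    unfolding s_def using fin_B x by (auto simp: B_def parity_ineqs_def)
  have w_between: "min v (x i) \<le> w" "w \<le> max v (x i)"
    unfolding w_def using v i s_le(1) s_ge by auto
  have dist_w: "l1_dist I (x(i := w)) F = l1_dist I x F + (if F \<in> B then - s else s)"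
    if "F \<in> odd_subsets I" for F
    unfolding w_def l1_dist_fun_upd[OF fin i(1)] B_def
    using that v i s_le s_ge by (auto simp: indicator_def)
  have "parity_ineqs I (x(i := w))"
    unfolding parity_ineqs_def
  proof (intro conjI ballI)
    show "in_unit_cube I (x(i := w))"
      using x v i w_between unfolding parity_ineqs_def in_unit_cube_def by auto
  next
    fix F assume F: "F \<in> odd_subsets I"
    show "1 \<le> l1_dist I (x(i := w)) F"
      using dist_w[OF F] s_le(2)[of F] s_ge x F by (auto simp: parity_ineqs_def split: if_splits)
  qed
  moreover have "w = v \<or> (\<exists>F\<in>odd_subsets I. l1_dist I (x(i := w)) F = 1)"
  proof -
    have "s \<in> insert \<bar>v - x i\<bar> ((\<lambda>F. l1_dist I x F - 1) ` B)"
      unfolding s_def using fin_B by (intro Min_in) auto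
    then show ?thesis
      using dist_w v i unfolding w_def by (auto simp: B_def)
  qed
  ultimately show ?thesis
    using that w_between by blast
qed

text \<open>Induction on the number of fractional coordinates: \<open>x\<close> lies between two points obtained
  by moving one fractional coordinate up and down, each of which has fewer fractional
  coordinates or lies on a facet.\<close>
lemma in_parity_polytope_if_parity_ineqs:
  assumes fin: "finite I"
  shows "parity_ineqs I x \<Longrightarrow> x \<in> parity_polytope I"
proof (induction "card {i\<in>I. 0 < x i \<and> x i < 1}" arbitrary: x rule: less_induct)
  case less
  show ?case
  proof (cases "\<exists>i\<in>I. 0 < x i \<and> x i < 1")
    case False
    then show ?thesis
      using less.prems unfolding parity_ineqs_def in_unit_cube_def
      by (intro in_parity_polytope_if_integral[OF fin less.prems]) force
  next
    case True
    then obtain i where i: "i \<in> I" "0 < x i" "x i < 1"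
      by blast
    have moved_in: "x(i := w) \<in> parity_polytope I"
      if v: "v = 0 \<or> v = 1" and w: "parity_ineqs I (x(i := w))"
        "w = v \<or> (\<exists>F\<in>odd_subsets I. l1_dist I (x(i := w)) F = 1)" for v w
      using w(2)
    proof
      assume "w = v"
      then have "card {j\<in>I. 0 < (x(i := w)) j \<and> (x(i := w)) j < 1} < card {j\<in>I. 0 < x j \<and> x j < 1}"
        using fin i v by (intro psubset_card_mono) auto
      then show ?thesis
        using less.hyps w(1) by blast
    next
      assume "\<exists>F\<in>odd_subsets I. l1_dist I (x(i := w)) F = 1"
      then show ?thesis
        using in_parity_polytope_if_tight[OF fin] w(1) unfolding parity_ineqs_def by blast
    qed
    obtain w1 where w1: "x i \<le> w1" "x(i := w1) \<in> parity_polytope I"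
      using move_coordinate_until_tight[OF fin less.prems i, of 1] moved_in[of 1] i by auto
    obtain w0 where w0: "w0 \<le> x i" "x(i := w0) \<in> parity_polytope I"
      using move_coordinate_until_tight[OF fin less.prems i, of 0] moved_in[of 0] i by auto
    show ?thesis
      by (rule in_parity_polytope_between[OF w0(2) w1(2) w0(1) w1(1)])
  qed
qed

theorem parity_polytope_eq:
  assumes "finite I"
  shows "parity_polytope I = {x. parity_ineqs I x}"
  using parity_ineqs_if_in_parity_polytope[OF assms] in_parity_polytope_if_parity_ineqs[OF assms]
  by blast

section \<open>Volume of the parity polytope\<close>

abbreviation product_lborel :: "'a set \<Rightarrow> ('a \<Rightarrow> real) measure" where
  "product_lborel I \<equiv> PiM I (\<lambda>_. lborel)"

lemma (in product_sigma_finite) distr_PiM_componentwise: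
  assumes fin: "finite I" and f: "\<And>i. i \<in> I \<Longrightarrow> f i \<in> measurable (M i) (M i)"
    and eq: "\<And>i. i \<in> I \<Longrightarrow> distr (M i) (M i) (f i) = M i"
  shows "distr (PiM I M) (PiM I M) (\<lambda>x. \<lambda>i\<in>I. f i (x i)) = PiM I M"
proof (rule PiM_eqI[OF fin])
  have meas: "(\<lambda>x. \<lambda>i\<in>I. f i (x i)) \<in> measurable (PiM I M) (PiM I M)"
    using f by (intro measurable_restrict measurable_compose[OF measurable_component_singleton]) auto
  fix A assume A: "\<And>i. i \<in> I \<Longrightarrow> A i \<in> sets (M i)"
  have "(\<lambda>x. \<lambda>i\<in>I. f i (x i)) -` PiE I A \<inter> space (PiM I M) = PiE I (\<lambda>i. f i -` A i \<inter> space (M i))"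
    by (auto simp: space_PiM PiE_iff)
  then have "emeasure (distr (PiM I M) (PiM I M) (\<lambda>x. \<lambda>i\<in>I. f i (x i))) (PiE I A)
      = emeasure (PiM I M) (PiE I (\<lambda>i. f i -` A i \<inter> space (M i)))"
    using A fin by (simp add: emeasure_distr[OF meas] sets_PiM_I_finite)
  also have "\<dots> = (\<Prod>i\<in>I. emeasure (M i) (f i -` A i \<inter> space (M i)))"
    using A f by (intro emeasure_PiM[OF fin]) (auto intro: measurable_sets)
  also have "\<dots> = (\<Prod>i\<in>I. emeasure (M i) (A i))"
    using A f eq by (intro prod.cong refl) (metis emeasure_distr)
  finally show "emeasure (distr (PiM I M) (PiM I M) (\<lambda>x. \<lambda>i\<in>I. f i (x i))) (PiE I A)
      = (\<Prod>i\<in>I. emeasure (M i) (A i))" .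
qed simp

lemma distr_lborel_reflect: "distr lborel lborel (\<lambda>t::real. 1 - t) = lborel"
proof -
  have "distr lborel lborel (\<lambda>t::real. 1 - t) = distr lborel borel (\<lambda>t::real. 1 - t)"
    by (simp cong: distr_cong)
  then show ?thesis
    using lborel_real_affine[of "-1" 1] by (simp add: density_1)
qed

lemma emeasure_std_simplex:
  assumes "finite I" "0 \<le> t"
  shows "emeasure (product_lborel I) {x \<in> space (product_lborel I). (\<forall>i\<in>I. 0 \<le> x i) \<and> sum x I \<le> t}
    = ennreal (t ^ card I / fact (card I))"
proof -
  have "{x \<in> space (product_lborel I). (\<forall>i\<in>I. 0 \<le> x i) \<and> sum x I \<le> t}
      = {x. (\<forall>i\<in>I. 0 \<le> x i) \<and> sum x I \<le> t} \<inter> space (product_lborel I)"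
    by auto
  then show ?thesis
    using emeasure_std_simplex_aux[OF assms] by (simp add: ennreal_fact[symmetric] divide_ennreal)
qed

lemma emeasure_open_std_simplex:
  assumes fin: "finite I"
  shows "emeasure (product_lborel I) {x \<in> space (product_lborel I). (\<forall>i\<in>I. 0 \<le> x i) \<and> sum x I < 1}
    = ennreal (1 / fact (card I))"
proof -
  define T where "T = {x \<in> space (product_lborel I). (\<forall>i\<in>I. 0 \<le> x i) \<and> sum x I < 1}"
  define S where "S t = {x \<in> space (product_lborel I). (\<forall>i\<in>I. 0 \<le> x i) \<and> sum x I \<le> t}" for t :: real
  define m where "m = card I"
  have T_sets: "T \<in> sets (product_lborel I)"
    unfolding T_def using fin by measurable
  have emeasure_S: "emeasure (product_lborel I) (S t) = ennreal (t ^ m / fact m)" if "0 \<le> t" for t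
    unfolding S_def m_def using fin that by (rule emeasure_std_simplex)
  have "emeasure (product_lborel I) T \<le> emeasure (product_lborel I) (S 1)"
    using fin by (intro emeasure_mono) (auto simp: T_def S_def)
  then have T_le: "emeasure (product_lborel I) T \<le> ennreal (1 / fact m)"
    using emeasure_S[of 1] by simp
  then have T_eq: "emeasure (product_lborel I) T = ennreal (measure (product_lborel I) T)"
    by (intro emeasure_eq_ennreal_measure) (auto simp: top_unique)
  \<comment> \<open>\<open>T\<close> is squeezed between \<open>S t\<close> for \<open>t < 1\<close> and \<open>S 1\<close>.\<close>
  have "t ^ m / fact m \<le> measure (product_lborel I) T" if "0 \<le> t" "t < 1" for t
  proof -
    have "ennreal (t ^ m / fact m) \<le> emeasure (product_lborel I) T"
      unfolding emeasure_S[OF that(1), symmetric] using T_sets that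
      by (intro emeasure_mono) (auto simp: T_def S_def)
    then show ?thesis
      using T_eq by simp
  qed
  moreover have "((\<lambda>t::real. t ^ m / fact m) \<longlongrightarrow> 1 ^ m / fact m) (at_left 1)"
    by (intro tendsto_intros) auto
  ultimately have "1 ^ m / fact m \<le> measure (product_lborel I) T"
    by (intro tendsto_le[OF _ tendsto_const, of "at_left 1" "\<lambda>t. t ^ m / fact m"])
       (auto simp: eventually_at_left_field intro: exI[of _ 0])
  moreover have "measure (product_lborel I) T \<le> 1 / fact m"
    using T_le T_eq by simp
  ultimately show ?thesis
    using T_eq unfolding T_def m_def by simp
qed

definition cube_corner :: "'a set \<Rightarrow> 'a set \<Rightarrow> ('a \<Rightarrow> real) set" where
  "cube_corner I F = {x \<in> space (product_lborel I). in_unit_cube I x \<and> l1_dist I x F < 1}"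

lemma sets_cube_corner [measurable]:
  "finite I \<Longrightarrow> cube_corner I F \<in> sets (product_lborel I)"
  unfolding cube_corner_def in_unit_cube_def l1_dist_def indicator_def by measurable

text \<open>Reflecting the coordinates in \<open>F\<close> maps the corner of the cube at the vertex \<open>F\<close>
  onto the corner at the origin, which is the open standard simplex.\<close>
lemma emeasure_cube_corner:
  assumes fin: "finite I" and F: "F \<subseteq> I"
  shows "emeasure (product_lborel I) (cube_corner I F) = ennreal (1 / fact (card I))"
proof -
  interpret product_sigma_finite "\<lambda>_::'a. lborel :: real measure"
    by standard
  define f where "f i = (if i \<in> F then (\<lambda>t::real. 1 - t) else id)" for i
  define reflect where "reflect x = (\<lambda>i\<in>I. f i (x i))" for x :: "'a \<Rightarrow> real"
  have reflect_meas: "reflect \<in> measurable (product_lborel I) (product_lborel I)"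
    unfolding reflect_def f_def
    by (intro measurable_restrict measurable_compose[OF measurable_component_singleton]) auto
  have "distr (product_lborel I) (product_lborel I) reflect = product_lborel I"
    unfolding reflect_def f_def using fin distr_lborel_reflect
    by (intro distr_PiM_componentwise) (auto simp: distr_id2)
  then have "emeasure (product_lborel I) (cube_corner I F)
      = emeasure (product_lborel I) (reflect -` cube_corner I F \<inter> space (product_lborel I))"
    using fin reflect_meas by (metis emeasure_distr sets_cube_corner)
  also have "reflect -` cube_corner I F \<inter> space (product_lborel I)
      = {x \<in> space (product_lborel I). (\<forall>i\<in>I. 0 \<le> x i) \<and> sum x I < 1}"
  proof -
    have "in_unit_cube I (reflect x) \<and> l1_dist I (reflect x) F < 1 \<longleftrightarrow>
        (\<forall>i\<in>I. 0 \<le> x i) \<and> sum x I < 1" for x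
    proof -
      have "in_unit_cube I (reflect x) \<longleftrightarrow> (\<forall>i\<in>I. 0 \<le> x i \<and> x i \<le> 1)"
        unfolding in_unit_cube_def reflect_def f_def by auto
      moreover have "l1_dist I (reflect x) F = (\<Sum>i\<in>I. \<bar>x i\<bar>)"
        unfolding l1_dist_def reflect_def f_def using F by (intro sum.cong) (auto simp: indicator_def)
      moreover have "x i \<le> sum x I" if "\<forall>i\<in>I. 0 \<le> x i" "i \<in> I" for i
        using that fin by (intro member_le_sum) auto
      ultimately show ?thesis
        by (smt (verit, best) sum.cong)
    qed
    moreover have "reflect x \<in> space (product_lborel I)" for x
      unfolding reflect_def by (simp add: space_PiM)
    ultimately show ?thesis
      unfolding cube_corner_def by auto
  qed
  finally show ?thesis
    using emeasure_open_std_simplex[OF fin] by simp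
qed

lemma disjoint_cube_corners:
  assumes fin: "finite I"
  shows "disjoint_family_on (cube_corner I) (odd_subsets I)"
  unfolding disjoint_family_on_def
proof (intro ballI impI)
  fix F G assume F: "F \<in> odd_subsets I" and G: "G \<in> odd_subsets I" and "F \<noteq> G"
  then have "2 \<le> card (sym_diff F G)"
    using fin by (intro two_le_card_sym_diff) (auto simp: odd_subsets_def finite_subset)
  then have "2 \<le> l1_dist I (indicator G) F"
    using fin F G by (simp add: l1_dist_indicator odd_subsets_def)
  moreover have "l1_dist I (indicator G) F \<le> l1_dist I x F + l1_dist I x G" for x
    unfolding l1_dist_def sum.distrib[symmetric] by (intro sum_mono) auto
  ultimately have "\<not> (l1_dist I x F < 1 \<and> l1_dist I x G < 1)" for x
    by (smt (verit))
  then show "cube_corner I F \<inter> cube_corner I G = {}"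
    unfolding cube_corner_def by blast
qed

lemma card_even_odd_subsets:
  assumes fin: "finite I" and ne: "I \<noteq> {}"
  shows "card (even_subsets I) = 2 ^ (card I - 1)" "card (odd_subsets I) = 2 ^ (card I - 1)"
proof -
  obtain a where a: "a \<in> I"
    using ne by blast
  have "bij_betw (\<lambda>G. sym_diff G {a}) (odd_subsets I) (even_subsets I)"
  proof (rule bij_betw_byWitness[where f' = "\<lambda>G. sym_diff G {a}"])
    have "even (card (sym_diff G {a})) \<longleftrightarrow> odd (card G)" if "G \<subseteq> I" for G
      using even_card_sym_diff[of G "{a}"] that fin finite_subset by auto
    then show "(\<lambda>G. sym_diff G {a}) ` odd_subsets I \<subseteq> even_subsets I"
      "(\<lambda>G. sym_diff G {a}) ` even_subsets I \<subseteq> odd_subsets I"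
      using a unfolding odd_subsets_def even_subsets_def by auto
  qed auto
  then have "card (odd_subsets I) = card (even_subsets I)"
    by (rule bij_betw_same_card)
  moreover have "card (even_subsets I) + card (odd_subsets I) = 2 ^ card I"
  proof -
    have "even_subsets I \<union> odd_subsets I = Pow I" "even_subsets I \<inter> odd_subsets I = {}"
      unfolding even_subsets_def odd_subsets_def by auto
    then show ?thesis
      using fin card_Un_disjoint[of "even_subsets I" "odd_subsets I"] by (simp add: card_Pow)
  qed
  moreover have "card I \<noteq> 0"
    using fin ne by simp
  ultimately show "card (even_subsets I) = 2 ^ (card I - 1)" "card (odd_subsets I) = 2 ^ (card I - 1)"
    by (cases "card I"; simp)+
qed

theorem measure_parity_polytope:
  assumes fin: "finite I" and ne: "I \<noteq> {}"
  shows "measure (product_lborel I) (parity_polytope I \<inter> space (product_lborel I))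
    = 1 - 2 ^ (card I - 1) / fact (card I)"
proof -
  interpret product_sigma_finite "\<lambda>_::'a. lborel :: real measure"
    by standard
  define C where "C = {x \<in> space (product_lborel I). in_unit_cube I x}"
  have C_eq: "C = PiE I (\<lambda>_. {0..1})"
    unfolding C_def in_unit_cube_def by (auto simp: space_PiM PiE_def)
  have C_measure: "emeasure (product_lborel I) C = 1"
    unfolding C_eq using fin by (simp add: emeasure_PiM)
  have polytope_eq: "parity_polytope I \<inter> space (product_lborel I)
      = C - (\<Union>F\<in>odd_subsets I. cube_corner I F)"
    unfolding parity_polytope_eq[OF fin] parity_ineqs_def C_def cube_corner_def by (auto simp: not_less)
  have "measure (product_lborel I) (parity_polytope I \<inter> space (product_lborel I))
      = measure (product_lborel I) C - measure (product_lborel I) (\<Union>F\<in>odd_subsets I. cube_corner I F)"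
    unfolding polytope_eq
  proof (rule measure_Diff)
    show "emeasure (product_lborel I) C \<noteq> \<infinity>"
      using C_measure by simp
    show "C \<in> sets (product_lborel I)"
      unfolding C_eq using fin by (intro sets_PiM_I_finite) auto
    show "(\<Union>F\<in>odd_subsets I. cube_corner I F) \<in> sets (product_lborel I)"
      using fin by (intro sets.finite_UN) auto
    show "(\<Union>F\<in>odd_subsets I. cube_corner I F) \<subseteq> C"
      unfolding C_def cube_corner_def by auto
  qed
  also have "measure (product_lborel I) C = 1"
    using C_measure by (simp add: measure_def)
  also have "measure (product_lborel I) (\<Union>F\<in>odd_subsets I. cube_corner I F)
      = (\<Sum>F\<in>odd_subsets I. measure (product_lborel I) (cube_corner I F))"
    using fin disjoint_cube_corners[OF fin] by (intro measure_finite_Union) (auto simp: emeasure_cube_corner odd_subsets_def)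
  also have "\<dots> = card (odd_subsets I) / fact (card I)"
    using fin by (simp add: measure_def emeasure_cube_corner odd_subsets_def)
  finally show ?thesis
    using card_even_odd_subsets(2)[OF fin ne] by simp
qed

section \<open>The cut polytope of the cycle\<close>

definition cut_set :: "'a set set \<Rightarrow> 'a set \<Rightarrow> 'a set set" where
  "cut_set E S = {e \<in> E. card (e \<inter> S) = 1}"

lemma cut_vector_eq_indicator: "e \<in> E \<Longrightarrow> cut_vector S e = indicator (cut_set E S) e"
  unfolding cut_vector_def cut_set_def by simp

lemma card_doubleton_inter_eq_1:
  "a \<noteq> b \<Longrightarrow> card ({a, b} \<inter> S) = 1 \<longleftrightarrow> (a \<in> S \<longleftrightarrow> b \<notin> S)"
  by (cases "a \<in> S"; cases "b \<in> S") (auto simp: Int_insert_left)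

lemma sum_cut_vectors_reindex:
  assumes bij: "bij_betw (cut_set E) (Pow {1..n-1}) (even_subsets E)" and e: "e \<in> E"
  shows "(\<Sum>S\<in>Pow {1..n-1}. c (cut_set E S) * cut_vector S e) = (\<Sum>F\<in>even_subsets E. c F * indicator F e)"
proof -
  have "(\<Sum>S\<in>Pow {1..n-1}. c (cut_set E S) * cut_vector S e)
      = (\<Sum>S\<in>Pow {1..n-1}. c (cut_set E S) * indicator (cut_set E S) e)"
    using e by (intro sum.cong) (simp_all add: cut_vector_eq_indicator)
  also have "\<dots> = (\<Sum>F\<in>even_subsets E. c F * indicator F e)"
    by (rule sum.reindex_bij_betw[OF bij, where g = "\<lambda>F. c F * indicator F e"])
  finally show ?thesis .
qed

lemma in_parity_polytope_if_in_cut_polytope: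
  assumes bij: "bij_betw (cut_set E) (Pow {1..n-1}) (even_subsets E)" and x: "x \<in> cut_polytope n E"
  shows "x \<in> parity_polytope E"
proof -
  obtain c where c: "\<forall>S. 0 \<le> c S" "(\<Sum>S\<in>Pow {1..n-1}. c S) = 1"
    and x: "x = (\<lambda>e\<in>E. \<Sum>S\<in>Pow {1..n-1}. c S * cut_vector S e)"
    using x unfolding cut_polytope_def by blast
  define d where "d F = c (the_inv_into (Pow {1..n-1}) (cut_set E) F)" for F
  have c_eq: "c S = d (cut_set E S)" if "S \<in> Pow {1..n-1}" for S
    unfolding d_def using bij that by (simp add: bij_betw_def the_inv_into_f_f)
  have "\<forall>F. 0 \<le> d F"
    unfolding d_def using c(1) by simp
  moreover have "sum d (even_subsets E) = 1"
  proof -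
    have "sum d (even_subsets E) = (\<Sum>S\<in>Pow {1..n-1}. d (cut_set E S))"
      by (rule sum.reindex_bij_betw[OF bij, symmetric])
    then show ?thesis
      using c(2) c_eq by (metis (no_types, lifting) sum.cong)
  qed
  moreover have "x e = (\<Sum>F\<in>even_subsets E. d F * indicator F e)" if "e \<in> E" for e
  proof -
    have "x e = (\<Sum>S\<in>Pow {1..n-1}. d (cut_set E S) * cut_vector S e)"
      unfolding x using that c_eq by simp
    then show ?thesis
      using sum_cut_vectors_reindex[OF bij that] by simp
  qed
  ultimately show ?thesis
    unfolding parity_polytope_def by blast
qed

lemma in_cut_polytope_if_in_parity_polytope:
  assumes bij: "bij_betw (cut_set E) (Pow {1..n-1}) (even_subsets E)"
    and x: "x \<in> parity_polytope E" "x \<in> extensional E"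
  shows "x \<in> cut_polytope n E"
proof -
  obtain d where d: "\<forall>F. 0 \<le> d F" "sum d (even_subsets E) = 1"
    and x_e: "\<forall>e\<in>E. x e = (\<Sum>F\<in>even_subsets E. d F * indicator F e)"
    using x(1) unfolding parity_polytope_def by blast
  have "x = (\<lambda>e\<in>E. \<Sum>S\<in>Pow {1..n-1}. d (cut_set E S) * cut_vector S e)"
    using x(2) x_e sum_cut_vectors_reindex[OF bij] by (auto simp: extensional_def)
  moreover have "(\<Sum>S\<in>Pow {1..n-1}. d (cut_set E S)) = 1"
    using d(2) sum.reindex_bij_betw[OF bij, of d] by simp
  ultimately show ?thesis
    unfolding cut_polytope_def using d(1) by (intro CollectI exI[of _ "\<lambda>S. d (cut_set E S)"]) simp
qed

lemma cut_polytope_eq_parity_polytope: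
  assumes bij: "bij_betw (cut_set E) (Pow {1..n-1}) (even_subsets E)"
  shows "cut_polytope n E = parity_polytope E \<inter> space (product_lborel E)"
proof -
  have "cut_polytope n E \<subseteq> extensional E"
    unfolding cut_polytope_def by auto
  then show ?thesis
    using in_parity_polytope_if_in_cut_polytope[OF bij] in_cut_polytope_if_in_parity_polytope[OF bij]
    by (auto simp: space_PiM PiE_def)
qed

definition cycle_succ :: "nat \<Rightarrow> nat \<Rightarrow> nat" where
  "cycle_succ n i = (if i < n then Suc i else 1)"

definition cycle_edge :: "nat \<Rightarrow> nat \<Rightarrow> nat set" where
  "cycle_edge n i = {i, cycle_succ n i}"

lemma cycle_succ_in: "i \<in> {1..n} \<Longrightarrow> cycle_succ n i \<in> {1..n}"
  unfolding cycle_succ_def by auto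

lemma cycle_succ_neq: "2 \<le> n \<Longrightarrow> i \<in> {1..n} \<Longrightarrow> cycle_succ n i \<noteq> i"
  unfolding cycle_succ_def by auto

lemma bij_betw_cycle_succ: "bij_betw (cycle_succ n) {1..n} {1..n}"
proof -
  have "inj_on (cycle_succ n) {1..n}"
    unfolding inj_on_def cycle_succ_def by auto
  then show ?thesis
    using cycle_succ_in by (intro bij_betw_imageI endo_inj_surj) auto
qed

lemma cycle_edges_eq_image:
  assumes "1 \<le> n"
  shows "cycle_edges n = cycle_edge n ` {1..n}"
proof -
  have "{1..n} = {i. 1 \<le> i \<and> i < n} \<union> {n}"
    using assms by auto
  moreover have "cycle_edge n ` {i. 1 \<le> i \<and> i < n} = {{i, i + 1} | i. 1 \<le> i \<and> i < n}"
    unfolding cycle_edge_def cycle_succ_def by auto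
  ultimately show ?thesis
    unfolding cycle_edges_def by (simp add: cycle_edge_def cycle_succ_def)
qed

lemma inj_on_cycle_edge:
  assumes "3 \<le> n"
  shows "inj_on (cycle_edge n) {1..n}"
  unfolding inj_on_def cycle_edge_def cycle_succ_def
  using assms by (auto simp: doubleton_eq_iff split: if_splits)

lemma finite_cycle_edges: "finite (cycle_edges n)"
proof -
  have "{{i, i + 1} | i. 1 \<le> i \<and> i < n} = (\<lambda>i. {i, i + 1}) ` {1..<n}"
    by auto
  then show ?thesis
    unfolding cycle_edges_def by simp
qed

lemma cycle_edges_nonempty: "cycle_edges n \<noteq> {}"
  unfolding cycle_edges_def by auto

lemma card_cycle_edges: "3 \<le> n \<Longrightarrow> card (cycle_edges n) = n"
  using card_image[OF inj_on_cycle_edge] by (simp add: cycle_edges_eq_image)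

lemma cycle_edge_in_cut_set_iff:
  assumes "3 \<le> n" "i \<in> {1..n}"
  shows "cycle_edge n i \<in> cut_set (cycle_edges n) S \<longleftrightarrow> (i \<in> S \<longleftrightarrow> cycle_succ n i \<notin> S)"
proof -
  have "cycle_edge n i \<in> cycle_edges n"
    using assms by (simp add: cycle_edges_eq_image)
  moreover have "i \<noteq> cycle_succ n i"
    using assms cycle_succ_neq[of n i] by simp
  ultimately show ?thesis
    using card_doubleton_inter_eq_1[of i "cycle_succ n i" S] unfolding cut_set_def cycle_edge_def by simp
qed

lemma cut_set_cycle_edges:
  assumes "3 \<le> n"
  shows "cut_set (cycle_edges n) S = cycle_edge n ` {i \<in> {1..n}. i \<in> S \<longleftrightarrow> cycle_succ n i \<notin> S}"
proof -
  have "cut_set (cycle_edges n) S = {e \<in> cycle_edge n ` {1..n}. e \<in> cut_set (cycle_edges n) S}"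
    using assms by (auto simp: cut_set_def cycle_edges_eq_image)
  also have "\<dots> = cycle_edge n ` {i \<in> {1..n}. i \<in> S \<longleftrightarrow> cycle_succ n i \<notin> S}"
    using cycle_edge_in_cut_set_iff[OF assms] by blast
  finally show ?thesis .
qed

text \<open>Walking around the cycle, \<open>S\<close> is entered as often as it is left.\<close>
lemma even_card_cut_set_cycle:
  assumes n: "3 \<le> n"
  shows "even (card (cut_set (cycle_edges n) S))"
proof -
  define crossing where "crossing = {i \<in> {1..n}. i \<in> S \<longleftrightarrow> cycle_succ n i \<notin> S}"
  define b where "b i = (if i \<in> S then 1 else 0 :: int)" for i
  have "card (cut_set (cycle_edges n) S) = card crossing"
    unfolding cut_set_cycle_edges[OF n] crossing_def
    using inj_on_cycle_edge[OF n] by (intro card_image) (auto intro: inj_on_subset)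
  moreover have "int (card crossing) = (\<Sum>i\<in>{1..n}. b i + b (cycle_succ n i) - 2 * b i * b (cycle_succ n i))"
  proof -
    have "int (card crossing) = (\<Sum>i\<in>{1..n}. if i \<in> S \<longleftrightarrow> cycle_succ n i \<notin> S then 1 else 0)"
      unfolding crossing_def by (simp add: sum.inter_filter[symmetric])
    also have "\<dots> = (\<Sum>i\<in>{1..n}. b i + b (cycle_succ n i) - 2 * b i * b (cycle_succ n i))"
      by (intro sum.cong) (auto simp: b_def)
    finally show ?thesis .
  qed
  moreover have "(\<Sum>i\<in>{1..n}. b (cycle_succ n i)) = (\<Sum>i\<in>{1..n}. b i)"
    by (rule sum.reindex_bij_betw[OF bij_betw_cycle_succ])
  ultimately have "int (card (cut_set (cycle_edges n) S))
      = 2 * ((\<Sum>i\<in>{1..n}. b i) - (\<Sum>i\<in>{1..n}. b i * b (cycle_succ n i)))"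
    by (simp add: sum.distrib sum_subtractf sum_distrib_left mult.assoc)
  then show ?thesis
    by (metis even_of_nat dvd_triv_left)
qed

text \<open>A cut of the connected graph \<open>C\<^sub>n\<close> determines its shore up to complement, and the
  vertex \<open>n\<close> is never in the shore.\<close>
lemma inj_on_cut_set_cycle:
  assumes n: "3 \<le> n"
  shows "inj_on (cut_set (cycle_edges n)) (Pow {1..n-1})"
proof
  fix S T assume S: "S \<in> Pow {1..n-1}" and T: "T \<in> Pow {1..n-1}"
    and eq: "cut_set (cycle_edges n) S = cut_set (cycle_edges n) T"
  have crossing: "(i \<in> S \<longleftrightarrow> cycle_succ n i \<notin> S) \<longleftrightarrow> (i \<in> T \<longleftrightarrow> cycle_succ n i \<notin> T)"
    if "i \<in> {1..n}" for i
    using cycle_edge_in_cut_set_iff[OF n that, of S] cycle_edge_in_cut_set_iff[OF n that, of T] eq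
    by simp
  have same: "k \<in> S \<longleftrightarrow> k \<in> T" if "1 \<le> k" "k \<le> n" for k
    using that
  proof (induction k rule: dec_induct)
    case base
    then show ?case
      using crossing[of n] S T n by (auto simp: cycle_succ_def)
  next
    case (step k)
    then show ?case
      using crossing[of k] by (auto simp: cycle_succ_def)
  qed
  show "S = T"
  proof (intro set_eqI)
    fix k
    show "k \<in> S \<longleftrightarrow> k \<in> T"
      using same[of k] S T by (cases "1 \<le> k \<and> k \<le> n") auto
  qed
qed

lemma bij_betw_cut_set_cycle:
  assumes n: "3 \<le> n"
  shows "bij_betw (cut_set (cycle_edges n)) (Pow {1..n-1}) (even_subsets (cycle_edges n))"
proof -
  have "cut_set (cycle_edges n) ` Pow {1..n-1} \<subseteq> even_subsets (cycle_edges n)"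
    using even_card_cut_set_cycle[OF n] by (auto simp: even_subsets_def cut_set_def)
  moreover have "card (cut_set (cycle_edges n) ` Pow {1..n-1}) = card (even_subsets (cycle_edges n))"
    using inj_on_cut_set_cycle[OF n] n
    by (simp add: card_image card_Pow card_cycle_edges
        card_even_odd_subsets(1)[OF finite_cycle_edges cycle_edges_nonempty])
  ultimately have "cut_set (cycle_edges n) ` Pow {1..n-1} = even_subsets (cycle_edges n)"
    using finite_cycle_edges by (intro card_subset_eq) auto
  then show ?thesis
    using inj_on_cut_set_cycle[OF n] by (simp add: bij_betw_def)
qed

theorem proposition5:
  fixes n :: nat
  assumes "n \<ge> 3"
  shows "cut_volume n (cycle_edges n) = 1 - 2 ^ (n - 1) / fact n"
proof -
  have "cut_volume n (cycle_edges n)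
      = measure (product_lborel (cycle_edges n)) (parity_polytope (cycle_edges n) \<inter> space (product_lborel (cycle_edges n)))"
    unfolding cut_volume_def cut_polytope_eq_parity_polytope[OF bij_betw_cut_set_cycle[OF assms]] ..
  also have "\<dots> = 1 - 2 ^ (n - 1) / fact n"
    using measure_parity_polytope[OF finite_cycle_edges cycle_edges_nonempty] card_cycle_edges[OF assms]
    by simp
  finally show ?thesis .
qed

end
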